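(* Let $T>0$, $m\in\,]0,1[$ and let $\mathcal{U}(t,x)=t^{-\alpha}\left(D+\tilde k|x|^2t^{-2\alpha}\right)^{-\frac{1}{1-m}}$ for $t>0$, $x\in\mathbb{R}$, with $\alpha=\frac{1}{m+1}$, $\tilde k=\frac{1-m}{2(m+1)m}$, $D=\left(\frac{I}{\sqrt{\tilde k}}\right)^{\frac{2(1-m)}{m+1}}$, $I=\int_{-\pi/2}^{\pi/2}[\cos(x)]^{\frac{2m}{1-m}}dx$. Then: (i) if $\frac13<m<1$, there exist $p\ge2$ and a constant $\mathcal{C}_p$ (depending on $T$) such that for all $0\le s<\ell\le T$, \[\int_{]s,\ell]\times\mathbb{R}}\left(\mathcal{U}(t,x)\right)^{\frac{p(m-1)}{2}+1}dt\,dx\le\mathcal{C}_p(\ell-s);\] (ii) if $\frac13<m<1$, $\int_{]0,T]\times\mathbb{R}}(\mathcal{U}(t,x))^m\,dt\,dx<+\infty$; (iii) if $\frac15<m<1$, $\int_{]0,T]\times\mathbb{R}}(\mathcal{U}(t,x))^{2m}\,dt\,dx<+\infty$; (iv) if $\frac35<m<1$, then for every $\kappa>0$, $\int_{\mathbb{R}}|x|^4\,\mathcal{U}(\kappa,x)\,dx<+\infty$. *)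

theory Defs
  imports "HOL-Analysis.Analysis"
begin

definition alpha_exp :: "real \<Rightarrow> real" where
  "alpha_exp m = 1 / (m + 1)"

definition ktilde :: "real \<Rightarrow> real" where
  "ktilde m = (1 - m) / (2 * (m + 1) * m)"

definition Icos :: "real \<Rightarrow> real" where
  "Icos m = integral {-(pi/2)..pi/2} (\<lambda>x. cos x powr (2 * m / (1 - m)))"

definition Dconst :: "real \<Rightarrow> real" where
  "Dconst m = (Icos m / sqrt (ktilde m)) powr (2 * (1 - m) / (m + 1))"

definition Ucal :: "real \<Rightarrow> real \<Rightarrow> real \<Rightarrow> real" where
  "Ucal m t x = t powr (- alpha_exp m) *
     (Dconst m + ktilde m * \<bar>x\<bar>^2 * t powr (- 2 * alpha_exp m)) powr (- 1 / (1 - m))"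

end

theory Submission
  imports Defs
begin

text \<open>
  The profile is self-similar: substituting \<open>x = t powr \<alpha> * y\<close> gives
  \<open>\<integral> U(t,x) powr r dx = t powr (\<alpha> (1 - r)) * \<integral> (D + k y\<^sup>2) powr (-r/(1-m)) dy\<close>,
  so by Tonelli each space-time integral factors into a power of \<open>t\<close> integrated over the
  time interval and a fixed integral in \<open>y\<close>. The latter is finite as soon as
  \<open>2r/(1-m) > 1\<close>, which for \<open>r = m\<close> and \<open>r = 2m\<close> are exactly the conditions \<open>m > 1/3\<close>
  and \<open>m > 1/5\<close>; the time factor is bounded for \<open>r = m \<le> 1\<close> (giving the bound linear in
  \<open>\<ell> - s\<close>, with \<open>p = 2\<close>) and integrable at \<open>0\<close> for \<open>r = 2m\<close>. Part (iv) is the same tail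
  estimate with the extra weight \<open>|x|\<^sup>4\<close>, which needs \<open>2/(1-m) - 4 > 1\<close>, i.e. \<open>m > 3/5\<close>.
  The constant \<open>D\<close> is positive because the integrand of \<open>I\<close> is at least \<open>(1/2) powr q\<close>
  on \<open>[-\<pi>/3, \<pi>/3]\<close>.
\<close>

lemma Icos_pos:
  assumes "0 < m" "m < 1"
  shows "Icos m > 0"
proof -
  define q where "q = 2 * m / (1 - m)"
  have q: "q > 0" using assms by (simp add: q_def)
  let ?f = "\<lambda>x. cos x powr q"
  have "continuous_on {-(pi/2)..pi/2} ?f"
    using q by (intro continuous_on_powr' continuous_intros) (auto intro!: cos_ge_zero)
  then have int_half: "?f integrable_on {-(pi/2)..pi/2}"
    using integrable_continuous_interval by blast
  have int_third: "?f integrable_on {-(pi/3)..pi/3}"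
    by (rule integrable_on_subinterval[OF int_half]) auto
  have "integral {-(pi/3)..pi/3} ?f \<le> integral {-(pi/2)..pi/2} ?f"
    by (rule integral_subset_le[OF _ int_third int_half]) (auto intro!: cos_ge_zero)
  moreover have "integral {-(pi/3)..pi/3} (\<lambda>x. (1/2::real) powr q) \<le> integral {-(pi/3)..pi/3} ?f"
  proof (rule integral_le[OF _ int_third])
    show "(\<lambda>x. (1/2::real) powr q) integrable_on {-(pi/3)..pi/3}"
      by (intro integrable_continuous_interval continuous_intros)
    fix x assume x: "x \<in> {-(pi/3)..pi/3}"
    have "cos (pi/3) \<le> cos \<bar>x\<bar>"
      using x pi_gt3 by (intro cos_monotone_0_pi_le) auto
    then have "1/2 \<le> cos x" by (simp add: cos_60)
    then show "(1/2::real) powr q \<le> cos x powr q"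
      using q by (intro powr_mono2) auto
  qed
  moreover have "integral {-(pi/3)..pi/3} (\<lambda>x. (1/2::real) powr q) > 0"
    using pi_gt_zero by (simp add: content_real)
  ultimately show ?thesis unfolding Icos_def q_def by linarith
qed

lemma Barenblatt_constants_pos:
  assumes "0 < m" "m < 1"
  shows "Dconst m > 0" "ktilde m > 0" "alpha_exp m > 0"
proof -
  show k: "ktilde m > 0" using assms by (simp add: ktilde_def)
  show "Dconst m > 0" using Icos_pos[OF assms] k unfolding Dconst_def by simp
  show "alpha_exp m > 0" using assms by (simp add: alpha_exp_def)
qed

subsection \<open>Integrability on the real line\<close>

lemma nn_integral_powr_atLeast_1:
  assumes p: "p > 1"
  shows "(\<integral>\<^sup>+x. ennreal (x powr (-p) * indicator {1..} x) \<partial>lborel) = ennreal (1 / (p - 1))"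
proof -
  have "((\<lambda>x. x powr (-p)) has_integral (-(1 powr (-p+1)) / (-p+1))) {1..}"
    using p by (intro has_integral_powr_to_inf) auto
  moreover have "-(1 powr (-p+1)) / (-p+1) = 1 / (p - 1)"
    using p by (simp add: field_simps)
  moreover have "(\<lambda>x. x powr (-p) * indicator {1..} x) = (\<lambda>x. if x \<in> {1..} then x powr (-p) else 0)"
    by (auto simp: indicator_def fun_eq_iff)
  ultimately have "((\<lambda>x. x powr (-p) * indicator {1..} x) has_integral (1 / (p - 1))) UNIV"
    by (simp only: has_integral_restrict_UNIV)
  then show ?thesis
    by (intro nn_integral_has_integral_lborel) (auto simp: indicator_def)
qed

lemma nn_integral_abs_powr_tail_finite:
  assumes p: "p > 1"
  shows "(\<integral>\<^sup>+x. ennreal (\<bar>x\<bar> powr (-p)) * indicator {x. 1 \<le> \<bar>x\<bar>} x \<partial>lborel) < \<infinity>"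
proof -
  define h where "h x = ennreal (x powr (-p) * indicator {1..} x)" for x :: real
  have hm: "h \<in> borel_measurable borel" unfolding h_def by measurable
  have split: "ennreal (\<bar>x\<bar> powr (-p)) * indicator {x. 1 \<le> \<bar>x\<bar>} x = h x + h (0 + (-1) * x)" for x
    unfolding h_def by (auto simp: indicator_def)
  have "(\<integral>\<^sup>+x. h (0 + (-1) * x) \<partial>lborel) = (\<integral>\<^sup>+x. h x \<partial>lborel)"
    using nn_integral_real_affine[OF hm, of "-1" 0] by simp
  then have "(\<integral>\<^sup>+x. ennreal (\<bar>x\<bar> powr (-p)) * indicator {x. 1 \<le> \<bar>x\<bar>} x \<partial>lborel)
      = (\<integral>\<^sup>+x. h x \<partial>lborel) + (\<integral>\<^sup>+x. h x \<partial>lborel)"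
    by (simp only: split, subst nn_integral_add) (use hm in auto)
  also have "\<dots> < \<infinity>"
    using nn_integral_powr_atLeast_1[OF p] unfolding h_def by (simp flip: ennreal_plus)
  finally show ?thesis .
qed

lemma nn_integral_finite_if_bounded_and_powr_decay:
  fixes f :: "real \<Rightarrow> real"
  assumes f: "f \<in> borel_measurable borel" and p: "p > 1"
    and bounded: "\<And>x. \<bar>x\<bar> \<le> 1 \<Longrightarrow> f x \<le> A"
    and decay: "\<And>x. 1 \<le> \<bar>x\<bar> \<Longrightarrow> f x \<le> B * \<bar>x\<bar> powr (-p)"
  shows "(\<integral>\<^sup>+x. ennreal (f x) \<partial>lborel) < \<infinity>"
proof -
  define G where "G x = ennreal (\<bar>x\<bar> powr (-p)) * indicator {x. 1 \<le> \<bar>x\<bar>} x" for x :: real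
  have G: "G \<in> borel_measurable borel" unfolding G_def by measurable
  have le: "ennreal (f x) \<le> ennreal A * indicator {-1..1} x + ennreal B * G x" for x
  proof (cases "\<bar>x\<bar> \<le> 1")
    case True
    then have "ennreal (f x) \<le> ennreal A * indicator {-1..1} x"
      using bounded[OF True] by (auto simp: indicator_def intro: ennreal_leI)
    then show ?thesis by (rule order_trans) simp
  next
    case False
    have "ennreal (f x) \<le> ennreal (B * \<bar>x\<bar> powr (-p))"
      using decay[of x] False by (intro ennreal_leI) auto
    also have "\<dots> \<le> ennreal B * ennreal (\<bar>x\<bar> powr (-p))"
      by (cases "B \<ge> 0") (auto simp: ennreal_mult ennreal_neg mult_nonpos_nonneg)
    finally show ?thesis using False by (auto simp: G_def indicator_def intro: order_trans)
  qed
  have "(\<integral>\<^sup>+x. ennreal (f x) \<partial>lborel)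
      \<le> (\<integral>\<^sup>+x. ennreal A * indicator {-1..(1::real)} x + ennreal B * G x \<partial>lborel)"
    by (intro nn_integral_mono le)
  also have "\<dots> = ennreal A * ennreal 2 + ennreal B * (\<integral>\<^sup>+x. G x \<partial>lborel)"
    using G by (simp add: nn_integral_add nn_integral_cmult nn_integral_cmult_indicator)
  also have "\<dots> < \<infinity>"
    using nn_integral_abs_powr_tail_finite[OF p]
    by (simp add: G_def ennreal_mult_less_top flip: ennreal_mult)
  finally show ?thesis .
qed

lemma nn_integral_power_times_quadratic_powr_finite:
  fixes k :: nat and D K q :: real
  assumes D: "D > 0" and K: "K > 0" and q: "2 * q > k + 1"
  shows "(\<integral>\<^sup>+x. ennreal (\<bar>x\<bar> ^ k * (D + K * x\<^sup>2) powr (-q)) \<partial>lborel) < \<infinity>"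
proof (rule nn_integral_finite_if_bounded_and_powr_decay
    [where A = "D powr (-q)" and B = "K powr (-q)" and p = "2 * q - k"])
  show "(\<lambda>x. \<bar>x\<bar> ^ k * (D + K * x\<^sup>2) powr (-q)) \<in> borel_measurable borel" by measurable
  show "1 < 2 * q - k" using q by simp
  have q0: "q \<ge> 0" using q by simp
  fix x :: real
  {
    assume x: "\<bar>x\<bar> \<le> 1"
    have "\<bar>x\<bar> ^ k \<le> 1" using x by (intro power_le_one) auto
    moreover have "(D + K * x\<^sup>2) powr (-q) \<le> D powr (-q)"
      using D K q0 by (intro powr_mono2') auto
    ultimately show "\<bar>x\<bar> ^ k * (D + K * x\<^sup>2) powr (-q) \<le> D powr (-q)"
      using mult_mono[of "\<bar>x\<bar> ^ k" 1 "(D + K * x\<^sup>2) powr (-q)" "D powr (-q)"] by simp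
  next
    assume x: "1 \<le> \<bar>x\<bar>"
    have xk: "\<bar>x\<bar> ^ k = \<bar>x\<bar> powr k"
      using x by (simp add: powr_realpow)
    have "x\<^sup>2 = \<bar>x\<bar> powr 2" using x by (simp add: powr_realpow)
    then have x2q: "x\<^sup>2 powr (-q) = \<bar>x\<bar> powr (-(2 * q))"
      by (simp only: powr_powr) simp
    have "(D + K * x\<^sup>2) powr (-q) \<le> (K * x\<^sup>2) powr (-q)"
      using D K q0 x by (intro powr_mono2') auto
    also have "\<dots> = K powr (-q) * \<bar>x\<bar> powr (-(2 * q))"
      using K by (simp add: powr_mult x2q)
    finally have "\<bar>x\<bar> ^ k * (D + K * x\<^sup>2) powr (-q) \<le> K powr (-q) * (\<bar>x\<bar> powr k * \<bar>x\<bar> powr (-(2 * q)))"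
      unfolding xk mult.left_commute[of "K powr (-q)"] by (rule mult_left_mono) simp_all
    also have "\<bar>x\<bar> powr k * \<bar>x\<bar> powr (-(2 * q)) = \<bar>x\<bar> powr (-(2 * q - k))"
      by (simp flip: powr_add)
    finally show "\<bar>x\<bar> ^ k * (D + K * x\<^sup>2) powr (-q) \<le> K powr (-q) * \<bar>x\<bar> powr (-(2 * q - k))" .
  }
qed

subsection \<open>Integrals of powers of time\<close>

lemma nn_integral_powr_Ioc_le:
  assumes e: "e \<ge> 0" and sl: "0 \<le> s" "s \<le> l" "l \<le> T"
  shows "(\<integral>\<^sup>+t. ennreal (t powr e) * indicator {s<..l} t \<partial>lborel) \<le> ennreal (T powr e * (l - s))"
proof -
  have "(\<integral>\<^sup>+t. ennreal (t powr e) * indicator {s<..l} t \<partial>lborel)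
      \<le> (\<integral>\<^sup>+t. ennreal (T powr e) * indicator {s<..l} t \<partial>lborel)"
    using sl e by (intro nn_integral_mono) (auto simp: indicator_def intro!: ennreal_leI powr_mono2)
  also have "\<dots> = ennreal (T powr e * (l - s))"
    using sl by (subst nn_integral_cmult_indicator) (auto simp: ennreal_mult)
  finally show ?thesis .
qed

lemma nn_integral_powr_Ioc_0_finite:
  assumes e: "e > -1" and T: "T \<ge> 0"
  shows "(\<integral>\<^sup>+t. ennreal (t powr e) * indicator {0<..T} t \<partial>lborel) < \<infinity>"
proof -
  have "((\<lambda>t. t powr e) has_integral (T powr (e+1) / (e+1))) {0..T}"
    using has_integral_powr_from_0[OF e] T by simp
  moreover have "(\<lambda>t. t powr e * indicator {0..T} t) = (\<lambda>t. if t \<in> {0..T} then t powr e else 0)"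
    by (auto simp: indicator_def fun_eq_iff)
  ultimately have "((\<lambda>t. t powr e * indicator {0..T} t) has_integral (T powr (e+1) / (e+1))) UNIV"
    by (simp only: has_integral_restrict_UNIV)
  then have "(\<integral>\<^sup>+t. ennreal (t powr e * indicator {0..T} t) \<partial>lborel) = ennreal (T powr (e+1) / (e+1))"
    by (intro nn_integral_has_integral_lborel) (auto simp: indicator_def)
  moreover have "(\<integral>\<^sup>+t. ennreal (t powr e) * indicator {0<..T} t \<partial>lborel)
      \<le> (\<integral>\<^sup>+t. ennreal (t powr e * indicator {0..T} t) \<partial>lborel)"
    by (intro nn_integral_mono) (auto simp: indicator_def)
  ultimately show ?thesis by (simp add: le_less_trans)
qed

subsection \<open>Self-similarity of the profile\<close>

lemma Ucal_powr:
  assumes t: "t > 0"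
  shows "Ucal m t x powr r = t powr (- alpha_exp m * r) *
     (Dconst m + ktilde m * x\<^sup>2 * t powr (- 2 * alpha_exp m)) powr (-(r / (1 - m)))"
proof -
  have "Ucal m t x powr r = (t powr (- alpha_exp m)) powr r *
     ((Dconst m + ktilde m * \<bar>x\<bar>^2 * t powr (- 2 * alpha_exp m)) powr (- 1 / (1 - m))) powr r"
    unfolding Ucal_def by (rule powr_mult)
  also have "\<dots> = t powr (- alpha_exp m * r) *
     (Dconst m + ktilde m * x\<^sup>2 * t powr (- 2 * alpha_exp m)) powr (-(r / (1 - m)))"
    by (simp add: powr_powr)
  finally show ?thesis .
qed

lemma nn_integral_Ucal_powr_slice:
  assumes t: "t > 0"
  shows "(\<integral>\<^sup>+x. ennreal (Ucal m t x powr r) \<partial>lborel) = ennreal (t powr (alpha_exp m * (1 - r))) *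
    (\<integral>\<^sup>+y. ennreal ((Dconst m + ktilde m * y\<^sup>2) powr (-(r / (1 - m)))) \<partial>lborel)"
proof -
  define a where "a = alpha_exp m"
  define c where "c = t powr a"
  have c: "c > 0" using t by (simp add: c_def)
  define G where "G y = (Dconst m + ktilde m * y\<^sup>2) powr (-(r / (1 - m)))" for y :: real
  have meas: "(\<lambda>x. ennreal (Ucal m t x powr r)) \<in> borel_measurable borel"
    unfolding Ucal_def by measurable
  have rescaled: "ennreal (Ucal m t (0 + c * y) powr r) = ennreal (t powr (- a * r)) * ennreal (G y)" for y
  proof -
    have "(c * y)\<^sup>2 * t powr (- 2 * a) = y\<^sup>2 * (c\<^sup>2 * t powr (- 2 * a))"
      by (simp add: power_mult_distrib)
    also have "c\<^sup>2 * t powr (- 2 * a) = 1"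
      using t unfolding c_def by (simp add: power2_eq_square flip: powr_add)
    finally have "(c * y)\<^sup>2 * t powr (- 2 * a) = y\<^sup>2" by simp
    then have "Ucal m t (0 + c * y) powr r = t powr (- a * r) * G y"
      unfolding Ucal_powr[OF t] G_def a_def by (simp add: mult.assoc)
    then show ?thesis by (simp add: ennreal_mult G_def)
  qed
  have "(\<integral>\<^sup>+x. ennreal (Ucal m t x powr r) \<partial>lborel)
     = ennreal \<bar>c\<bar> * (\<integral>\<^sup>+y. ennreal (Ucal m t (0 + c * y) powr r) \<partial>lborel)"
    using nn_integral_real_affine[OF meas, of c 0] c by simp
  also have "\<dots> = ennreal c * (ennreal (t powr (- a * r)) * (\<integral>\<^sup>+y. ennreal (G y) \<partial>lborel))"
    using c by (simp only: rescaled, subst nn_integral_cmult) (auto simp: G_def)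
  also have "\<dots> = ennreal (t powr (a * (1 - r))) * (\<integral>\<^sup>+y. ennreal (G y) \<partial>lborel)"
    using c t unfolding c_def
    by (simp add: mult.assoc[symmetric] ennreal_mult[symmetric] algebra_simps flip: powr_add)
  finally show ?thesis unfolding a_def G_def .
qed

lemma nn_integral_Ucal_powr_strip:
  assumes s: "0 \<le> s"
  shows "(\<integral>\<^sup>+ z. ennreal (Ucal m (fst z) (snd z) powr r) * indicator ({s<..l} \<times> UNIV) z \<partial>(lborel \<Otimes>\<^sub>M lborel))
    = (\<integral>\<^sup>+t. ennreal (t powr (alpha_exp m * (1 - r))) * indicator {s<..l} t \<partial>lborel) *
    (\<integral>\<^sup>+y. ennreal ((Dconst m + ktilde m * y\<^sup>2) powr (-(r / (1 - m)))) \<partial>lborel)"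
    (is "?L = ?R")
proof -
  define J where "J = (\<integral>\<^sup>+y. ennreal ((Dconst m + ktilde m * y\<^sup>2) powr (-(r / (1 - m)))) \<partial>lborel)"
  have meas: "(\<lambda>z. ennreal (Ucal m (fst z) (snd z) powr r) * indicator ({s<..l} \<times> UNIV) z)
      \<in> borel_measurable (lborel \<Otimes>\<^sub>M lborel)"
    unfolding Ucal_def by measurable
  have "?L = (\<integral>\<^sup>+t. \<integral>\<^sup>+x. ennreal (Ucal m t x powr r) * indicator ({s<..l} \<times> UNIV) (t, x) \<partial>lborel \<partial>lborel)"
    using lborel.nn_integral_fst[OF meas] by simp
  also have "\<dots> = (\<integral>\<^sup>+t. ennreal (t powr (alpha_exp m * (1 - r))) * indicator {s<..l} t * J \<partial>lborel)"
  proof (rule nn_integral_cong)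
    fix t :: real
    show "(\<integral>\<^sup>+x. ennreal (Ucal m t x powr r) * indicator ({s<..l} \<times> UNIV) (t, x) \<partial>lborel)
        = ennreal (t powr (alpha_exp m * (1 - r))) * indicator {s<..l} t * J"
    proof (cases "t \<in> {s<..l}")
      case True
      then have "t > 0" using s by auto
      then show ?thesis using True nn_integral_Ucal_powr_slice[of t m r] by (simp add: indicator_def J_def)
    next
      case False
      then show ?thesis by (auto simp: indicator_def)
    qed
  qed
  also have "\<dots> = ?R" unfolding J_def
    by (rule nn_integral_multc) measurable
  finally show ?thesis .
qed

lemma nn_integral_Ucal_profile_finite:
  assumes "0 < m" "m < 1" "2 * r > 1 - m"
  shows "(\<integral>\<^sup>+y. ennreal ((Dconst m + ktilde m * y\<^sup>2) powr (-(r / (1 - m)))) \<partial>lborel) < \<infinity>"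
proof -
  have "2 * (r / (1 - m)) > real 0 + 1" using assms by (simp add: field_simps)
  then show ?thesis
    using nn_integral_power_times_quadratic_powr_finite
        [where k = 0 and D = "Dconst m" and K = "ktilde m" and q = "r / (1 - m)"]
      Barenblatt_constants_pos[OF assms(1,2)] by simp
qed

lemma nn_integral_Ucal_powr_m_strip_le:
  assumes m: "1/3 < m" "m < 1" and T: "T > 0"
  shows "\<exists>C. \<forall>s l. 0 \<le> s \<and> s < l \<and> l \<le> T \<longrightarrow>
        (\<integral>\<^sup>+ z. ennreal (Ucal m (fst z) (snd z) powr m)
              * indicator ({s<..l} \<times> UNIV) z \<partial>(lborel \<Otimes>\<^sub>M lborel))
        \<le> ennreal (C * (l - s))"
proof -
  define J where "J = (\<integral>\<^sup>+y. ennreal ((Dconst m + ktilde m * y\<^sup>2) powr (-(m / (1 - m)))) \<partial>lborel)"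
  have "J < \<infinity>" unfolding J_def using m by (intro nn_integral_Ucal_profile_finite) auto
  then have J: "J = ennreal (enn2real J)" by (simp add: less_top)
  define e where "e = alpha_exp m * (1 - m)"
  have e: "e \<ge> 0" using Barenblatt_constants_pos(3)[of m] m unfolding e_def by simp
  show ?thesis
  proof (intro exI allI impI)
    fix s l :: real assume sl: "0 \<le> s \<and> s < l \<and> l \<le> T"
    have "(\<integral>\<^sup>+ z. ennreal (Ucal m (fst z) (snd z) powr m)
              * indicator ({s<..l} \<times> UNIV) z \<partial>(lborel \<Otimes>\<^sub>M lborel))
        = (\<integral>\<^sup>+t. ennreal (t powr e) * indicator {s<..l} t \<partial>lborel) * J"
      using nn_integral_Ucal_powr_strip[of s m m l] sl unfolding e_def J_def by simp
    also have "\<dots> \<le> ennreal (T powr e * (l - s)) * ennreal (enn2real J)"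
      using nn_integral_powr_Ioc_le[OF e, of s l T] sl by (subst J) (intro mult_right_mono, auto)
    also have "\<dots> = ennreal (T powr e * enn2real J * (l - s))"
      using sl by (simp add: ennreal_mult mult_ac)
    finally show "(\<integral>\<^sup>+ z. ennreal (Ucal m (fst z) (snd z) powr m)
              * indicator ({s<..l} \<times> UNIV) z \<partial>(lborel \<Otimes>\<^sub>M lborel))
        \<le> ennreal (T powr e * enn2real J * (l - s))" .
  qed
qed

lemma nn_integral_Ucal_powr_2m_finite:
  assumes m: "1/5 < m" "m < 1" and T: "T > 0"
  shows "(\<integral>\<^sup>+ z. ennreal (Ucal m (fst z) (snd z) powr (2 * m))
              * indicator ({0<..T} \<times> UNIV) z \<partial>(lborel \<Otimes>\<^sub>M lborel)) < \<infinity>"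
proof -
  have "alpha_exp m * (1 - 2 * m) > -1"
    using m unfolding alpha_exp_def by (simp add: field_simps)
  then have "(\<integral>\<^sup>+t. ennreal (t powr (alpha_exp m * (1 - 2 * m))) * indicator {0<..T} t \<partial>lborel) < \<infinity>"
    using T by (intro nn_integral_powr_Ioc_0_finite) auto
  moreover have "(\<integral>\<^sup>+y. ennreal ((Dconst m + ktilde m * y\<^sup>2) powr (-(2 * m / (1 - m)))) \<partial>lborel) < \<infinity>"
    using m by (intro nn_integral_Ucal_profile_finite) auto
  ultimately show ?thesis
    using nn_integral_Ucal_powr_strip[of 0 m "2 * m" T] by (simp add: ennreal_mult_less_top)
qed

lemma nn_integral_fourth_moment_Ucal_finite:
  assumes m: "3/5 < m" "m < 1" and \<kappa>: "\<kappa> > 0"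
  shows "(\<integral>\<^sup>+ x. ennreal (\<bar>x\<bar>^4 * Ucal m \<kappa> x) \<partial>lborel) < \<infinity>"
proof -
  define K where "K = ktilde m * \<kappa> powr (- 2 * alpha_exp m)"
  define \<beta> where "\<beta> = 1 / (1 - m)"
  have pos: "Dconst m > 0" "K > 0"
    using Barenblatt_constants_pos[of m] m \<kappa> unfolding K_def by auto
  have "2 * \<beta> > real 4 + 1" using m unfolding \<beta>_def by (simp add: field_simps)
  then have "(\<integral>\<^sup>+x. ennreal (\<bar>x\<bar> ^ 4 * (Dconst m + K * x\<^sup>2) powr (-\<beta>)) \<partial>lborel) < \<infinity>"
    using nn_integral_power_times_quadratic_powr_finite[where k = 4 and D = "Dconst m" and K = K and q = \<beta>] pos by simp
  moreover have "ennreal (\<bar>x\<bar>^4 * Ucal m \<kappa> x)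
      = ennreal (\<kappa> powr (- alpha_exp m)) * ennreal (\<bar>x\<bar> ^ 4 * (Dconst m + K * x\<^sup>2) powr (-\<beta>))" for x
    unfolding Ucal_def K_def \<beta>_def by (simp add: ennreal_mult' mult_ac)
  ultimately show ?thesis
    by (simp add: nn_integral_cmult ennreal_mult_less_top)
qed

theorem lemma4p2:
  fixes T m :: real
  assumes "T > 0" and "0 < m" and "m < 1"
  shows
   "(1/3 < m \<longrightarrow> (\<exists>p::real. p \<ge> 2 \<and> (\<exists>C::real. \<forall>s l. 0 \<le> s \<and> s < l \<and> l \<le> T \<longrightarrow>
        (\<integral>\<^sup>+ z. ennreal (Ucal m (fst z) (snd z) powr (p * (m - 1) / 2 + 1))
              * indicator ({s<..l} \<times> UNIV) z \<partial>(lborel \<Otimes>\<^sub>M lborel))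
        \<le> ennreal (C * (l - s)))))
  \<and> (1/3 < m \<longrightarrow>
        (\<integral>\<^sup>+ z. ennreal (Ucal m (fst z) (snd z) powr m)
              * indicator ({0<..T} \<times> UNIV) z \<partial>(lborel \<Otimes>\<^sub>M lborel)) < \<infinity>)
  \<and> (1/5 < m \<longrightarrow>
        (\<integral>\<^sup>+ z. ennreal (Ucal m (fst z) (snd z) powr (2 * m))
              * indicator ({0<..T} \<times> UNIV) z \<partial>(lborel \<Otimes>\<^sub>M lborel)) < \<infinity>)
  \<and> (3/5 < m \<longrightarrow> (\<forall>\<kappa>>0.
        (\<integral>\<^sup>+ x. ennreal (\<bar>x\<bar>^4 * Ucal m \<kappa> x) \<partial>lborel) < \<infinity>))"
proof (intro conjI impI allI)
  assume "1/3 < m"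
  then obtain C where C: "\<forall>s l. 0 \<le> s \<and> s < l \<and> l \<le> T \<longrightarrow>
        (\<integral>\<^sup>+ z. ennreal (Ucal m (fst z) (snd z) powr m)
              * indicator ({s<..l} \<times> UNIV) z \<partial>(lborel \<Otimes>\<^sub>M lborel))
        \<le> ennreal (C * (l - s))"
    using nn_integral_Ucal_powr_m_strip_le assms by blast
  have p2: "(2::real) * (m - 1) / 2 + 1 = m" by (simp add: field_simps)
  show "\<exists>p::real. p \<ge> 2 \<and> (\<exists>C::real. \<forall>s l. 0 \<le> s \<and> s < l \<and> l \<le> T \<longrightarrow>
        (\<integral>\<^sup>+ z. ennreal (Ucal m (fst z) (snd z) powr (p * (m - 1) / 2 + 1))
              * indicator ({s<..l} \<times> UNIV) z \<partial>(lborel \<Otimes>\<^sub>M lborel))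
        \<le> ennreal (C * (l - s)))"
    using C by (intro exI[of _ 2]) (simp only: p2, auto)
  show "(\<integral>\<^sup>+ z. ennreal (Ucal m (fst z) (snd z) powr m)
              * indicator ({0<..T} \<times> UNIV) z \<partial>(lborel \<Otimes>\<^sub>M lborel)) < \<infinity>"
    using C[rule_format, of 0 T] assms(1) by (simp add: le_less_trans)
next
  assume "1/5 < m"
  then show "(\<integral>\<^sup>+ z. ennreal (Ucal m (fst z) (snd z) powr (2 * m))
              * indicator ({0<..T} \<times> UNIV) z \<partial>(lborel \<Otimes>\<^sub>M lborel)) < \<infinity>"
    using nn_integral_Ucal_powr_2m_finite assms by blast
next
  fix \<kappa> :: real
  assume "3/5 < m" "\<kappa> > 0"
  then show "(\<integral>\<^sup>+ x. ennreal (\<bar>x\<bar>^4 * Ucal m \<kappa> x) \<partial>lborel) < \<infinity>"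
    using nn_integral_fourth_moment_Ucal_finite assms by blast
qed

end
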